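(* Consider the Polytope Scheduling Problem with all jobs available at time $0$, fix $\delta>0$ and $\beta\in(0,1)$, assume every $p_j$ is an integer power of $1+\delta$ and all predictions are underestimates ($\hat p_j\le p_j$), and suppose a procedure computing $\alpha$-approximate $O(1)$-preemptive schedules is given. Then the total number of preemptions performed by the epoch-based framework with parameters $\beta,\delta$ is at most $$O\Big(\frac{1}{\beta\delta}\sum_j\Big(1+\log_2\frac{p_j}{\hat p_j}\Big)\Big).$$
   Context: Polytope Scheduling Problem (PSP): jobs $j=1,\dots,n$, all available at time $0$, with processing requirements $p_j$ unknown until completion, and known predictions $\hat p_j$. A matrix $B=[b_{dj}]\in\mathbb R_{\ge0}^{D\times n}$ defines $\mathcal P=\{y\in\mathbb R^n_{\ge0}:By\le\mathbf 1\}$. A schedule selects at each time $t$ rates $y(t)\in\mathcal P$ for the unfinished jobs; job $j$ completes when $\int_0^{C_j}y_j(t)\,dt\ge p_j$. The notion of preemption is specific to the concrete problem modeled by $\mathcal P$. An $\alpha$-approximate $O(1)$-preemptive schedule for a PSP schedule of length $l$ with fixed rates $\{y_j\}_{j\in J}$ is a schedule that gives each job $j$ at least $l y_j$ units of processing, has makespan at most $\alpha l$, and uses $O(1)$ preemptions per job. Framework with parameters $\beta,\delta$: proceeds in epochs $k=1,2,\dots$ starting at $e_k$ ($e_1=0$). Let $J_k$ be the unfinished jobs at $e_k$, $n_k=|J_k|$, and $q_j(t)$ the processing $j$ received by time $t$. At $e_k$: (1) compute $y^{(k)}$ maximizing $\sum_{j\in J_k}\log y_j$ subject to $\sum_{j\in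 J_k}b_{dj}y_j\le1$ for all $d$, $y\ge0$; (2) set $u_{j,k}=(1+\delta)^{h+1}-q_j(e_k)$ where $(1+\delta)^h\le\max\{q_j(e_k),\hat p_j\}<(1+\delta)^{h+1}$, $h$ integer; (3) let $l_k$ be the length of the shortest interval such that processing at rates $y^{(k)}$ for that length makes at least $\lceil\beta n_k\rceil$ jobs of $J_k$ receive $u_{j,k}$ units, and set $v_{j,k}=\min\{u_{j,k},l_ky^{(k)}_j\}$; (4) run, starting at $e_k$, an $\alpha$-approximate $O(1)$-preemptive schedule for $J_k$ with processing requirements $v_{j,k}$, which finishes by $e_{k+1}\le e_k+\alpha l_k$; then epoch $k+1$ begins. *)

theory Defs
  imports Complex_Main
begin

text \<open>Jobs are indexed by 0..n-1, constraint rows of B by 0..D-1; B d j is b_dj.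
  Epochs are indexed from 0 (epoch k here is epoch k+1 of the paper).
  q k j is the processing job j has received by the start e k of epoch k.\<close>

definition unfinished :: "nat \<Rightarrow> (nat \<Rightarrow> real) \<Rightarrow> (nat \<Rightarrow> real) \<Rightarrow> nat set" where
  "unfinished n p qk = {j. j < n \<and> qk j < p j}"

definition feasible_rates :: "nat \<Rightarrow> (nat \<Rightarrow> nat \<Rightarrow> real) \<Rightarrow> nat set \<Rightarrow> (nat \<Rightarrow> real) \<Rightarrow> bool" where
  "feasible_rates D B S y \<longleftrightarrow> (\<forall>j\<in>S. 0 \<le> y j) \<and> (\<forall>d<D. (\<Sum>j\<in>S. B d j * y j) \<le> 1)"

text \<open>y maximizes sum_{j in S} log y_j over the feasible rates (vectors with a zero
  coordinate have objective -infinity, hence the positivity requirements).\<close>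
definition log_optimal :: "nat \<Rightarrow> (nat \<Rightarrow> nat \<Rightarrow> real) \<Rightarrow> nat set \<Rightarrow> (nat \<Rightarrow> real) \<Rightarrow> bool" where
  "log_optimal D B S y \<longleftrightarrow>
     (\<forall>j\<in>S. 0 < y j) \<and> feasible_rates D B S y \<and>
     (\<forall>y'. (\<forall>j\<in>S. 0 < y' j) \<and> feasible_rates D B S y' \<longrightarrow>
            (\<Sum>j\<in>S. ln (y' j)) \<le> (\<Sum>j\<in>S. ln (y j)))"

definition shortest_length :: "real \<Rightarrow> nat set \<Rightarrow> (nat \<Rightarrow> real) \<Rightarrow> (nat \<Rightarrow> real) \<Rightarrow> real \<Rightarrow> bool" where
  "shortest_length \<beta> S y u l \<longleftrightarrow>
     0 \<le> l \<and> int (card {j\<in>S. u j \<le> l * y j}) \<ge> \<lceil>\<beta> * real (card S)\<rceil> \<and>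
     (\<forall>l'. 0 \<le> l' \<and> l' < l \<longrightarrow> int (card {j\<in>S. u j \<le> l' * y j}) < \<lceil>\<beta> * real (card S)\<rceil>)"

text \<open>A run of the epoch framework with parameters beta, delta, using an
  alpha-approximate schedule procedure whose schedules preempt each job at most c times.
  The epoch schedule processes each job of S on requirement v k j (or until the job
  completes), finishes by e k + alpha * l k, and preempts job j exactly pi k j times.\<close>
definition framework_run ::
  "nat \<Rightarrow> nat \<Rightarrow> (nat \<Rightarrow> nat \<Rightarrow> real) \<Rightarrow> (nat \<Rightarrow> real) \<Rightarrow> (nat \<Rightarrow> real) \<Rightarrow> real \<Rightarrow> real \<Rightarrow> real \<Rightarrow> nat \<Rightarrow>
   (nat \<Rightarrow> nat \<Rightarrow> real) \<Rightarrow> (nat \<Rightarrow> nat \<Rightarrow> real) \<Rightarrow> (nat \<Rightarrow> nat \<Rightarrow> real) \<Rightarrow> (nat \<Rightarrow> real) \<Rightarrow>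
   (nat \<Rightarrow> nat \<Rightarrow> real) \<Rightarrow> (nat \<Rightarrow> real) \<Rightarrow> (nat \<Rightarrow> nat \<Rightarrow> nat) \<Rightarrow> bool" where
  "framework_run n D B p ph \<beta> \<delta> \<alpha> c q y u l v e \<pi> \<longleftrightarrow>
     e 0 = 0 \<and> (\<forall>j<n. q 0 j = 0) \<and>
     (\<forall>k. let S = unfinished n p (q k) in
        log_optimal D B S (y k) \<and>
        (\<forall>j\<in>S. \<exists>h::int. (1 + \<delta>) powi h \<le> max (q k j) (ph j) \<and>
                          max (q k j) (ph j) < (1 + \<delta>) powi (h + 1) \<and>
                          u k j = (1 + \<delta>) powi (h + 1) - q k j) \<and>
        shortest_length \<beta> S (y k) (u k) (l k) \<and>
        (\<forall>j\<in>S. v k j = min (u k j) (l k * y k j)) \<and>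
        (\<forall>j<n. q (Suc k) j = (if j \<in> S then min (p j) (q k j + v k j) else q k j)) \<and>
        e k \<le> e (Suc k) \<and> e (Suc k) \<le> e k + \<alpha> * l k \<and>
        (\<forall>j\<in>S. \<pi> k j \<le> c))"

text \<open>Preemptions performed in the first K epochs: those inside the epoch schedules, plus
  one for every job that is still unfinished at the end of an epoch (it is interrupted at
  the epoch boundary and resumed in a later epoch).\<close>
definition total_preemptions ::
  "nat \<Rightarrow> (nat \<Rightarrow> real) \<Rightarrow> (nat \<Rightarrow> nat \<Rightarrow> real) \<Rightarrow> (nat \<Rightarrow> nat \<Rightarrow> nat) \<Rightarrow> nat \<Rightarrow> nat" where
  "total_preemptions n p q \<pi> K =
     (\<Sum>k<K. (\<Sum>j\<in>unfinished n p (q k). \<pi> k j)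
             + card (unfinished n p (q k) \<inter> unfinished n p (q (Suc k))))"

end

theory Submission
  imports Defs
begin

text \<open>A job advances in an epoch if it receives its full u_{j,k}, i.e. its processing reaches
  the next power of 1 + delta (or it completes). By the choice of l_k at least a beta fraction
  of the unfinished jobs advance in every epoch, and each unfinished job accounts for at most
  c + 1 preemptions per epoch (c inside the epoch schedule, one at its end), so the preemptions
  number at most (c + 1) / beta times the advances. Each advance raises the phase index h of step (2) by
  at least one, and h runs from the phase of ph_j up to the exponent of p_j, itself a power of
  1 + delta; so job j advances at most 2 + log_{1+delta} (p_j / ph_j) times, which is
  O((1 + log_2 (p_j / ph_j)) / delta).\<close>

lemma power_int_le_power_int_iff:
  fixes b :: "'a :: linordered_field"
  assumes "1 < b"
  shows "b powi m \<le> b powi n \<longleftrightarrow> m \<le> n"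
  using assms power_int_increasing[of m n b] power_int_strict_increasing[of n m b]
  by (meson less_le_not_le linorder_le_less_linear order_less_imp_le)

lemma power_int_less_power_int_iff:
  fixes b :: "'a :: linordered_field"
  assumes "1 < b"
  shows "b powi m < b powi n \<longleftrightarrow> m < n"
  using power_int_le_power_int_iff[OF assms, of n m] by (simp add: not_le[symmetric])

lemma log_power_int [simp]:
  fixes b :: real
  assumes "0 < b" "b \<noteq> 1"
  shows "log b (b powi k) = k"
  using assms by (simp flip: powr_real_of_int')

lemma ln_one_plus_ge:
  fixes d :: real
  assumes "0 < d"
  shows "d / (1 + d) \<le> ln (1 + d)"
  using ln_diff_le[of 1 "1 + d"] assms by (simp add: diff_divide_distrib)

lemma log_one_plus_le:
  fixes d r :: real
  assumes "0 < d" "1 \<le> r"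
  shows "log (1 + d) r \<le> (1 + d) / d * log 2 r"
proof -
  have "ln r * ln 2 \<le> ln r"
    using assms ln_le_minus_one[of 2] by (intro mult_right_le_one_le) auto
  then have "ln r \<le> log 2 r"
    by (simp add: log_def le_divide_eq)
  then have "ln r / ln (1 + d) \<le> log 2 r / (d / (1 + d))"
    using assms ln_one_plus_ge[of d] by (intro frac_le) auto
  then show ?thesis
    by (simp add: log_def mult_ac)
qed

lemma two_plus_log_le:
  fixes d d0 r :: real
  assumes "0 < d" "d \<le> d0" "1 \<le> r"
  shows "2 + log (1 + d) r \<le> 2 * (1 + d0) / d * (1 + log 2 r)"
proof -
  have "1 \<le> (1 + d0) / d"
    using assms by (simp add: le_divide_eq)
  have "0 \<le> log 2 r"
    using assms by simp
  have "(1 + d) / d \<le> (1 + d0) / d"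
    using assms by (simp add: divide_right_mono)
  then have "(1 + d) / d * log 2 r \<le> (1 + d0) / d * log 2 r"
    using \<open>0 \<le> log 2 r\<close> by (rule mult_right_mono)
  then have "log (1 + d) r \<le> (1 + d0) / d * log 2 r"
    using log_one_plus_le[OF assms(1,3)] by linarith
  moreover have "0 \<le> (1 + d0) / d * log 2 r"
    using \<open>1 \<le> (1 + d0) / d\<close> \<open>0 \<le> log 2 r\<close> by (intro mult_nonneg_nonneg) linarith+
  moreover have "2 * (1 + d0) / d * (1 + log 2 r) = 2 * ((1 + d0) / d) + 2 * ((1 + d0) / d * log 2 r)"
    by (simp add: distrib_left)
  ultimately show ?thesis
    using \<open>1 \<le> (1 + d0) / d\<close> by linarith
qed

lemma card_events_le_potential:
  fixes P :: "nat \<Rightarrow> nat"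
  assumes "\<And>k. P (Suc k) + of_bool (F k) \<le> P k"
  shows "card {k \<in> {..<K}. F k} + P K \<le> P 0"
proof (induction K)
  case (Suc K)
  have "{k \<in> {..<Suc K}. F k} = (if F K then insert K {k \<in> {..<K}. F k} else {k \<in> {..<K}. F k})"
    by (auto simp: lessThan_Suc)
  then show ?case
    using Suc.IH assms[of K] by (cases "F K") simp_all
qed simp

locale framework_execution =
  fixes n D :: nat and B :: "nat \<Rightarrow> nat \<Rightarrow> real" and p ph :: "nat \<Rightarrow> real"
    and \<beta> \<delta> \<alpha> :: real and c :: nat and q y u :: "nat \<Rightarrow> nat \<Rightarrow> real"
    and l :: "nat \<Rightarrow> real" and v :: "nat \<Rightarrow> nat \<Rightarrow> real" and e :: "nat \<Rightarrow> real"
    and \<pi> :: "nat \<Rightarrow> nat \<Rightarrow> nat"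
  assumes run: "framework_run n D B p ph \<beta> \<delta> \<alpha> c q y u l v e \<pi>"
begin

abbreviation J :: "nat \<Rightarrow> nat set" where
  "J k \<equiv> unfinished n p (q k)"

lemma q_0: "j < n \<Longrightarrow> q 0 j = 0"
  using run by (simp add: framework_run_def)

lemma epoch_conditions:
  "log_optimal D B (J k) (y k) \<and>
   (\<forall>j\<in>J k. \<exists>h::int. (1 + \<delta>) powi h \<le> max (q k j) (ph j) \<and>
                    max (q k j) (ph j) < (1 + \<delta>) powi (h + 1) \<and>
                    u k j = (1 + \<delta>) powi (h + 1) - q k j) \<and>
   shortest_length \<beta> (J k) (y k) (u k) (l k) \<and>
   (\<forall>j\<in>J k. v k j = min (u k j) (l k * y k j)) \<and>
   (\<forall>j<n. q (Suc k) j = (if j \<in> J k then min (p j) (q k j + v k j) else q k j)) \<and>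
   (\<forall>j\<in>J k. \<pi> k j \<le> c)"
  using run unfolding framework_run_def Let_def by blast

lemma rates_pos: "j \<in> J k \<Longrightarrow> 0 < y k j"
  using epoch_conditions unfolding log_optimal_def by blast

lemma phase_exists:
  "j \<in> J k \<Longrightarrow> \<exists>h. (1 + \<delta>) powi h \<le> max (q k j) (ph j) \<and> max (q k j) (ph j) < (1 + \<delta>) powi (h + 1)
      \<and> u k j = (1 + \<delta>) powi (h + 1) - q k j"
  using epoch_conditions by blast

lemma l_shortest: "shortest_length \<beta> (J k) (y k) (u k) (l k)"
  using epoch_conditions by blast

lemma v_eq: "j \<in> J k \<Longrightarrow> v k j = min (u k j) (l k * y k j)"
  using epoch_conditions by blast

lemma q_Suc: "j < n \<Longrightarrow> q (Suc k) j = (if j \<in> J k then min (p j) (q k j + v k j) else q k j)"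
  using epoch_conditions by blast

lemma schedule_preemptions_le: "j \<in> J k \<Longrightarrow> \<pi> k j \<le> c"
  using epoch_conditions by blast

lemma finite_J: "finite (J k)"
  by (simp add: unfinished_def)

lemma J_Suc_subset: "J (Suc k) \<subseteq> J k"
proof
  fix j assume "j \<in> J (Suc k)"
  then show "j \<in> J k"
    using q_Suc[of j k] by (auto simp: unfinished_def split: if_split_asm)
qed

definition advancing :: "nat \<Rightarrow> nat set" where
  "advancing k = {j \<in> J k. u k j \<le> l k * y k j}"

lemma card_J_le_advancing: "\<beta> * card (J k) \<le> card (advancing k)"
proof -
  have "\<lceil>\<beta> * card (J k)\<rceil> \<le> int (card (advancing k))"
    using l_shortest[of k] by (simp add: shortest_length_def advancing_def)
  then show ?thesis
    by linarith
qed

lemma epoch_preemptions_le: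
  "(\<Sum>j\<in>J k. \<pi> k j) + card (J k \<inter> J (Suc k)) \<le> (c + 1) * card (J k)"
proof -
  have "(\<Sum>j\<in>J k. \<pi> k j) \<le> c * card (J k)"
    using sum_mono[of "J k" "\<pi> k" "\<lambda>_. c"] schedule_preemptions_le by (simp add: mult.commute)
  moreover have "card (J k \<inter> J (Suc k)) \<le> card (J k)"
    using finite_J by (intro card_mono) auto
  ultimately show ?thesis
    by simp
qed

lemma total_preemptions_le_advancing:
  assumes "0 < \<beta>"
  shows "real (total_preemptions n p q \<pi> K) \<le> (c + 1) / \<beta> * (\<Sum>k<K. card (advancing k))"
proof -
  have "real (total_preemptions n p q \<pi> K) \<le> (\<Sum>k<K. real (c + 1) * card (J k))"
    unfolding total_preemptions_def of_nat_sum
    by (intro sum_mono) (metis epoch_preemptions_le of_nat_le_iff of_nat_mult)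
  also have "\<dots> \<le> (\<Sum>k<K. (c + 1) / \<beta> * card (advancing k))"
  proof (intro sum_mono)
    fix k
    have "real (card (J k)) \<le> card (advancing k) / \<beta>"
      using card_J_le_advancing[of k] assms by (simp add: field_simps)
    then show "real (c + 1) * card (J k) \<le> (c + 1) / \<beta> * card (advancing k)"
      using mult_left_mono[of _ _ "real (c + 1)"] by fastforce
  qed
  finally show ?thesis
    by (simp add: sum_distrib_left)
qed

lemma sum_card_advancing:
  "(\<Sum>k<K. card (advancing k)) = (\<Sum>j<n. card {k \<in> {..<K}. j \<in> advancing k})"
proof -
  have "advancing k = {j \<in> {..<n}. j \<in> advancing k}" for k
    by (auto simp: advancing_def unfinished_def)
  then show ?thesis
    using sum_multicount_gen[of "{..<K}" "{..<n}" "\<lambda>k j. j \<in> advancing k"] by simp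
qed

definition phase :: "nat \<Rightarrow> nat \<Rightarrow> int" where
  "phase k j = (SOME h. (1 + \<delta>) powi h \<le> max (q k j) (ph j) \<and> max (q k j) (ph j) < (1 + \<delta>) powi (h + 1)
      \<and> u k j = (1 + \<delta>) powi (h + 1) - q k j)"

lemma phase:
  assumes "j \<in> J k"
  shows "(1 + \<delta>) powi phase k j \<le> max (q k j) (ph j)"
    and "max (q k j) (ph j) < (1 + \<delta>) powi (phase k j + 1)"
    and "u k j = (1 + \<delta>) powi (phase k j + 1) - q k j"
  using someI_ex[OF phase_exists[OF assms]] unfolding phase_def by blast+

lemma q_Suc_unfinished:
  assumes "j \<in> J (Suc k)"
  shows "q (Suc k) j = q k j + v k j"
proof -
  have "j \<in> J k" "q (Suc k) j < p j"
    using assms J_Suc_subset by (auto simp: unfinished_def)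
  then show ?thesis
    using q_Suc[of j k] by (auto simp: unfinished_def min_def split: if_split_asm)
qed

lemma v_nonneg:
  assumes "j \<in> J k"
  shows "0 \<le> v k j"
proof -
  have "0 \<le> u k j"
    using phase[OF assms] by linarith
  moreover have "0 \<le> l k"
    using l_shortest[of k] by (simp add: shortest_length_def)
  ultimately show ?thesis
    using v_eq[OF assms] rates_pos[OF assms] by simp
qed

end

locale underestimated_execution = framework_execution +
  assumes \<delta>_pos: "0 < \<delta>"
    and ph_pos: "j < n \<Longrightarrow> 0 < ph j"
    and ph_le_p: "j < n \<Longrightarrow> ph j \<le> p j"
    and p_power: "j < n \<Longrightarrow> \<exists>m::int. p j = (1 + \<delta>) powi m"
begin

definition exponent :: "nat \<Rightarrow> int" where
  "exponent j = (SOME m. p j = (1 + \<delta>) powi m)"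

lemma p_eq_power: "j < n \<Longrightarrow> p j = (1 + \<delta>) powi exponent j"
  unfolding exponent_def using p_power by (rule someI_ex)

lemma phase_le_exponent:
  assumes "j \<in> J k"
  shows "phase k j \<le> exponent j"
proof -
  have "j < n" "q k j < p j"
    using assms by (auto simp: unfinished_def)
  then have "(1 + \<delta>) powi phase k j \<le> (1 + \<delta>) powi exponent j"
    using phase(1)[OF assms] ph_le_p p_eq_power by fastforce
  then show ?thesis
    using \<delta>_pos by (simp add: power_int_le_power_int_iff)
qed

lemma phase_mono:
  assumes "j \<in> J (Suc k)"
  shows "phase k j \<le> phase (Suc k) j"
proof -
  have "j \<in> J k"
    using assms J_Suc_subset by blast
  then have "(1 + \<delta>) powi phase k j < (1 + \<delta>) powi (phase (Suc k) j + 1)"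
    using phase[OF \<open>j \<in> J k\<close>] phase[OF assms] q_Suc_unfinished[OF assms] v_nonneg by fastforce
  then show ?thesis
    using \<delta>_pos by (simp add: power_int_less_power_int_iff)
qed

lemma phase_advance:
  assumes "j \<in> advancing k" "j \<in> J (Suc k)"
  shows "phase k j < phase (Suc k) j"
proof -
  have "j \<in> J k" "v k j = u k j"
    using assms v_eq by (auto simp: advancing_def)
  then have "(1 + \<delta>) powi (phase k j + 1) < (1 + \<delta>) powi (phase (Suc k) j + 1)"
    using phase[OF \<open>j \<in> J k\<close>] phase[OF assms(2)] q_Suc_unfinished[OF assms(2)] by fastforce
  then show ?thesis
    using \<delta>_pos by (simp add: power_int_less_power_int_iff)
qed

definition remaining_phases :: "nat \<Rightarrow> nat \<Rightarrow> nat" where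
  "remaining_phases k j = (if j \<in> J k then nat (exponent j - phase k j + 1) else 0)"

lemma remaining_phases_Suc:
  "remaining_phases (Suc k) j + of_bool (j \<in> advancing k) \<le> remaining_phases k j"
proof (cases "j \<in> J (Suc k)")
  case True
  then show ?thesis
    using J_Suc_subset phase_le_exponent phase_mono phase_advance
    by (fastforce simp: remaining_phases_def)
next
  case False
  then show ?thesis
    by (auto simp: remaining_phases_def advancing_def dest: phase_le_exponent)
qed

lemma card_advancing_epochs_le: "card {k \<in> {..<K}. j \<in> advancing k} \<le> remaining_phases 0 j"
  using add_leD1[OF card_events_le_potential[of "\<lambda>k. remaining_phases k j", OF remaining_phases_Suc]] .

lemma remaining_phases_0_le:
  assumes "j < n"
  shows "remaining_phases 0 j \<le> 2 + log (1 + \<delta>) (p j / ph j)"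
proof -
  have "j \<in> J 0"
    using assms q_0 ph_pos ph_le_p by (fastforce simp: unfinished_def)
  have "ph j < (1 + \<delta>) powi (phase 0 j + 1)"
    using phase(2)[OF \<open>j \<in> J 0\<close>] q_0 ph_pos assms by simp
  then have "log (1 + \<delta>) (ph j) < phase 0 j + 1"
    using \<delta>_pos ph_pos[OF assms] log_less[of "1 + \<delta>" "ph j" "(1 + \<delta>) powi (phase 0 j + 1)"] by simp
  moreover have "exponent j = log (1 + \<delta>) (p j)"
    using p_eq_power[OF assms] \<delta>_pos by simp
  moreover have "real (remaining_phases 0 j) = of_int (exponent j) - of_int (phase 0 j) + 1"
    using \<open>j \<in> J 0\<close> phase_le_exponent[OF \<open>j \<in> J 0\<close>] by (simp add: remaining_phases_def)
  moreover have "log (1 + \<delta>) (p j / ph j) = log (1 + \<delta>) (p j) - log (1 + \<delta>) (ph j)"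
    using ph_pos[OF assms] ph_le_p[OF assms] by (simp add: log_divide)
  ultimately show ?thesis
    by linarith
qed

theorem total_preemptions_le_log:
  assumes "0 < \<beta>"
  shows "real (total_preemptions n p q \<pi> K) \<le> (c + 1) / \<beta> * (\<Sum>j<n. 2 + log (1 + \<delta>) (p j / ph j))"
proof -
  have "real (total_preemptions n p q \<pi> K)
      \<le> (c + 1) / \<beta> * (\<Sum>j<n. real (card {k \<in> {..<K}. j \<in> advancing k}))"
    using total_preemptions_le_advancing[OF assms] by (simp add: sum_card_advancing)
  also have "\<dots> \<le> (c + 1) / \<beta> * (\<Sum>j<n. 2 + log (1 + \<delta>) (p j / ph j))"
  proof (intro mult_left_mono sum_mono)
    fix j
    assume "j \<in> {..<n}"
    then have "real (card {k \<in> {..<K}. j \<in> advancing k}) \<le> remaining_phases 0 j"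
      and "remaining_phases 0 j \<le> 2 + log (1 + \<delta>) (p j / ph j)"
      using card_advancing_epochs_le remaining_phases_0_le by simp_all
    then show "real (card {k \<in> {..<K}. j \<in> advancing k}) \<le> 2 + log (1 + \<delta>) (p j / ph j)"
      by linarith
  qed (use assms in simp)
  finally show ?thesis .
qed

lemma total_preemptions_le_log2:
  fixes \<delta>0 :: real
  assumes "0 < \<beta>" "\<delta> \<le> \<delta>0"
  shows "real (total_preemptions n p q \<pi> K)
    \<le> real (2 * (c + 1)) * (1 + \<delta>0) / (\<beta> * \<delta>) * (\<Sum>j<n. 1 + log 2 (p j / ph j))"
proof -
  have "real (total_preemptions n p q \<pi> K) \<le> (c + 1) / \<beta> * (\<Sum>j<n. 2 + log (1 + \<delta>) (p j / ph j))"
    using total_preemptions_le_log[OF assms(1)] .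
  also have "\<dots> \<le> (c + 1) / \<beta> * (\<Sum>j<n. 2 * (1 + \<delta>0) / \<delta> * (1 + log 2 (p j / ph j)))"
    using assms \<delta>_pos ph_pos ph_le_p
    by (intro mult_left_mono sum_mono two_plus_log_le) auto
  also have "\<dots> = real (2 * (c + 1)) * (1 + \<delta>0) / (\<beta> * \<delta>) * (\<Sum>j<n. 1 + log 2 (p j / ph j))"
    unfolding sum_distrib_left[symmetric] by (simp add: field_simps)
  finally show ?thesis .
qed

end

theorem mainTheorem10:
  fixes c :: nat and \<delta>0 :: real
  assumes "0 < \<delta>0"
  shows "\<exists>C>0. \<forall>(n::nat) (D::nat) (B::nat \<Rightarrow> nat \<Rightarrow> real) (p::nat \<Rightarrow> real) (ph::nat \<Rightarrow> real)
            (\<beta>::real) (\<delta>::real) (\<alpha>::real) q y u l v e \<pi> (K::nat).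
     (\<forall>d j. 0 \<le> B d j) \<and> 0 < \<beta> \<and> \<beta> < 1 \<and> 0 < \<delta> \<and> \<delta> \<le> \<delta>0 \<and>
     (\<forall>j<n. 0 < ph j \<and> ph j \<le> p j \<and> (\<exists>m::int. p j = (1 + \<delta>) powi m)) \<and>
     framework_run n D B p ph \<beta> \<delta> \<alpha> c q y u l v e \<pi>
     \<longrightarrow> real (total_preemptions n p q \<pi> K)
           \<le> C / (\<beta> * \<delta>) * (\<Sum>j<n. 1 + log 2 (p j / ph j))"
  apply (intro exI[of _ "real (2 * (c + 1)) * (1 + \<delta>0)"] conjI allI impI)
  subgoal
    using assms by simp
  subgoal premises hyps for n D B p ph \<beta> \<delta> \<alpha> q y u l v e \<pi> K
  proof -
    interpret underestimated_execution n D B p ph \<beta> \<delta> \<alpha> c q y u l v e \<pi>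
      using hyps by unfold_locales auto
    have "0 < \<beta>" "\<delta> \<le> \<delta>0"
      using hyps by auto
    then show ?thesis
      by (rule total_preemptions_le_log2)
  qed
  done

end
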